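(* Let $a\in\mathbb R$, $b\in[a,\infty)$, $d,L\in\mathbb N$, $l=(l_0,l_1,\dots,l_L)\in\mathbb N^{L+1}$ satisfy $d\ge\sum_{k=1}^Ll_k(l_{k-1}+1)$. Then for all $\theta,\vartheta\in\mathbb R^d$, $$\sup_{x\in[a,b]^{l_0}}\|\mathscr N^{\theta,l}_{-\infty,\infty}(x)-\mathscr N^{\vartheta,l}_{-\infty,\infty}(x)\|_\infty\le\max\{1,|a|,|b|\}\,\|\theta-\vartheta\|_\infty\Bigl[\prod_{m=0}^{L-1}(l_m+1)\Bigr]\Bigl[\sum_{n=0}^{L-1}\max\{1,\|\theta\|_\infty^n\}\,\|\vartheta\|_\infty^{L-1-n}\Bigr]$$ $$\le L\max\{1,|a|,|b|\}\bigl(\max\{1,\|\theta\|_\infty,\|\vartheta\|_\infty\}\bigr)^{L-1}\Bigl[\prod_{m=0}^{L-1}(l_m+1)\Bigr]\|\theta-\vartheta\|_\infty\le L\max\{1,|a|,|b|\}(\|l\|_\infty+1)^L\bigl(\max\{1,\|\theta\|_\infty,\|\vartheta\|_\infty\}\bigr)^{L-1}\|\theta-\vartheta\|_\infty.$$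
   Context: $\|\cdot\|_\infty$ denotes the maximum norm $\|\theta\|_\infty=\max_i|\theta_i|$ on any $\mathbb R^n$ (also applied to $l$). For $r,s\in\mathbb N$, $k\in\mathbb N_0$, $\theta\in\mathbb R^d$ with $d\ge k+rs+r$, $\mathcal A^{\theta,k}_{r,s}\colon\mathbb R^s\to\mathbb R^r$ has $i$-th component $x\mapsto\sum_{j=1}^s\theta_{k+(i-1)s+j}x_j+\theta_{k+rs+i}$. $\mathfrak R_n$ applies $y\mapsto\max\{y,0\}$ componentwise on $\mathbb R^n$. With $s_k=\sum_{j=1}^kl_j(l_{j-1}+1)$, the unclipped ReLU network is $\mathscr N^{\theta,l}_{-\infty,\infty}=\mathcal A^{\theta,s_{L-1}}_{l_L,l_{L-1}}\circ\mathfrak R_{l_{L-1}}\circ\mathcal A^{\theta,s_{L-2}}_{l_{L-1},l_{L-2}}\circ\cdots\circ\mathfrak R_{l_1}\circ\mathcal A^{\theta,0}_{l_1,l_0}\colon\mathbb R^{l_0}\to\mathbb R^{l_L}$ (for $L=1$ just $\mathcal A^{\theta,0}_{l_1,l_0}$). Convention $0^0=1$. *)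

theory Defs
  imports Complex_Main
begin

text \<open>Vectors in R^n are represented as functions nat => real, with the
relevant components indexed by 1..n (as in the paper).\<close>

definition maxnorm :: "nat \<Rightarrow> (nat \<Rightarrow> real) \<Rightarrow> real" where
  "maxnorm n v = Max ((\<lambda>i. \<bar>v i\<bar>) ` {1..n})"

definition affine_map :: "(nat \<Rightarrow> real) \<Rightarrow> nat \<Rightarrow> nat \<Rightarrow> nat \<Rightarrow> (nat \<Rightarrow> real) \<Rightarrow> (nat \<Rightarrow> real)" where
  "affine_map \<theta> k r s x = (\<lambda>i. (\<Sum>j=1..s. \<theta> (k + (i - 1) * s + j) * x j) + \<theta> (k + r * s + i))"

definition relu_vec :: "(nat \<Rightarrow> real) \<Rightarrow> (nat \<Rightarrow> real)" where
  "relu_vec x = (\<lambda>i. max (x i) 0)"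

definition param_offset :: "(nat \<Rightarrow> nat) \<Rightarrow> nat \<Rightarrow> nat" where
  "param_offset l k = (\<Sum>j=1..k. l j * (l (j - 1) + 1))"

text \<open>net_layers theta l k x is the output of the first k affine layers
(with ReLU between them, none after the k-th); for k = L this is the
unclipped realization N^{theta,l}_{-inf,inf}.\<close>
fun net_layers :: "(nat \<Rightarrow> real) \<Rightarrow> (nat \<Rightarrow> nat) \<Rightarrow> nat \<Rightarrow> (nat \<Rightarrow> real) \<Rightarrow> (nat \<Rightarrow> real)" where
  "net_layers \<theta> l 0 x = x"
| "net_layers \<theta> l (Suc k) x =
     affine_map \<theta> (param_offset l k) (l (Suc k)) (l k)
       (if k = 0 then x else relu_vec (net_layers \<theta> l k x))"

definition realization :: "(nat \<Rightarrow> real) \<Rightarrow> (nat \<Rightarrow> nat) \<Rightarrow> nat \<Rightarrow> (nat \<Rightarrow> real) \<Rightarrow> (nat \<Rightarrow> real)" where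
  "realization \<theta> l L = net_layers \<theta> l L"

end

theory Submission
  imports Defs
begin

text \<open>Write c = max 1 (max |a| |b|), and t, s, \<delta> for the max-norms of \<theta>, \<phi> and
  \<theta> - \<phi>. By induction over the layers, the input of layer k + 1 of the \<theta>-network is bounded
  by c * P_k * max 1 (t^k), and its distance to the input of the \<phi>-network by
  c * \<delta> * P_k * S_k, where P_k = prod_{m<k} (l_m + 1) and
  S_{k+1} = max 1 (t^k) + s * S_k (width_prod l k and norm_power_sum t s k below).
  The induction step splits A^\<theta> u - A^\<phi> v = A^{\<theta> - \<phi>} u + (A^\<phi> u - A^\<phi> v) and uses that ReLU is
  1-Lipschitz; the bias term is absorbed by the inequality 1 <= c * P_k * max 1 (t^k).
  The coarser bounds follow from S_L <= L * max 1 (max t s)^(L-1) and l_m <= max l.\<close>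

lemma abs_le_maxnorm: "1 \<le> i \<Longrightarrow> i \<le> n \<Longrightarrow> \<bar>v i\<bar> \<le> maxnorm n v"
  unfolding maxnorm_def by (intro Max_ge) auto

lemma maxnorm_nonneg: "1 \<le> n \<Longrightarrow> 0 \<le> maxnorm n v"
  using abs_le_maxnorm[of 1 n v] by linarith

lemma maxnorm_le:
  "1 \<le> n \<Longrightarrow> (\<And>i. 1 \<le> i \<Longrightarrow> i \<le> n \<Longrightarrow> \<bar>v i\<bar> \<le> B) \<Longrightarrow> maxnorm n v \<le> B"
  unfolding maxnorm_def by (subst Max_le_iff) auto

lemma abs_le_maxnorm_prefix: "m \<le> n \<Longrightarrow> \<forall>i\<in>{1..m}. \<bar>v i\<bar> \<le> maxnorm n v"
  using abs_le_maxnorm[of _ n v] by auto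

lemma abs_sum_mult_le:
  fixes w u :: "'a \<Rightarrow> real"
  assumes w: "\<forall>j\<in>A. \<bar>w j\<bar> \<le> W" and u: "\<forall>j\<in>A. \<bar>u j\<bar> \<le> B"
  shows "\<bar>\<Sum>j\<in>A. w j * u j\<bar> \<le> real (card A) * (W * B)"
proof -
  have "\<bar>\<Sum>j\<in>A. w j * u j\<bar> \<le> (\<Sum>j\<in>A. \<bar>w j\<bar> * \<bar>u j\<bar>)"
    using sum_abs[of "\<lambda>j. w j * u j" A] by (simp add: abs_mult)
  also have "\<dots> \<le> (\<Sum>j\<in>A. W * B)"
  proof (rule sum_mono)
    fix j assume "j \<in> A"
    with w u have "\<bar>w j\<bar> \<le> W" "\<bar>u j\<bar> \<le> B" by auto
    then show "\<bar>w j\<bar> * \<bar>u j\<bar> \<le> W * B"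
      by (intro mult_mono) auto
  qed
  finally show ?thesis by simp
qed

lemma affine_map_weight_index:
  fixes i j k r s :: nat
  assumes "1 \<le> i" "i \<le> r" "1 \<le> j" "j \<le> s"
  shows "k + (i - 1) * s + j \<in> {k<..k + r * s + r}"
proof -
  obtain i' where "i = Suc i'" using assms by (cases i) auto
  with assms have "(i - 1) * s + j \<le> i * s" by simp
  also have "\<dots> \<le> r * s"
    using assms by simp
  finally show ?thesis using assms by simp
qed

lemma affine_map_bias_index:
  fixes i k r s :: nat
  shows "1 \<le> i \<Longrightarrow> i \<le> r \<Longrightarrow> k + r * s + i \<in> {k<..k + r * s + r}"
  by auto

lemma abs_affine_map_le:
  assumes i: "1 \<le> i" "i \<le> r"
    and u: "\<forall>j\<in>{1..s}. \<bar>u j\<bar> \<le> B"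
    and \<theta>: "\<forall>p\<in>{k<..k + r * s + r}. \<bar>\<theta> p\<bar> \<le> t"
  shows "\<bar>affine_map \<theta> k r s u i\<bar> \<le> t * (real s * B + 1)"
proof -
  have weights: "\<bar>\<Sum>j=1..s. \<theta> (k + (i - 1) * s + j) * u j\<bar> \<le> real s * (t * B)"
    using abs_sum_mult_le[OF _ u, of "\<lambda>j. \<theta> (k + (i - 1) * s + j)" t]
      \<theta> affine_map_weight_index[OF i] by simp
  have bias: "\<bar>\<theta> (k + r * s + i)\<bar> \<le> t"
    using \<theta> affine_map_bias_index[OF i] by blast
  show ?thesis
    unfolding affine_map_def
    using abs_triangle_ineq[of "\<Sum>j=1..s. \<theta> (k + (i - 1) * s + j) * u j"] weights bias
    by (simp add: algebra_simps)
qed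

lemma affine_map_diff_params:
  "affine_map \<theta> k r s u i - affine_map \<phi> k r s u i = affine_map (\<lambda>p. \<theta> p - \<phi> p) k r s u i"
  by (simp add: affine_map_def sum_subtractf left_diff_distrib)

lemma abs_affine_map_diff_inputs_le:
  assumes i: "1 \<le> i" "i \<le> r"
    and uv: "\<forall>j\<in>{1..s}. \<bar>u j - v j\<bar> \<le> D"
    and \<phi>: "\<forall>p\<in>{k<..k + r * s + r}. \<bar>\<phi> p\<bar> \<le> t"
  shows "\<bar>affine_map \<phi> k r s u i - affine_map \<phi> k r s v i\<bar> \<le> real s * (t * D)"
proof -
  have "affine_map \<phi> k r s u i - affine_map \<phi> k r s v i
      = (\<Sum>j=1..s. \<phi> (k + (i - 1) * s + j) * (u j - v j))"
    by (simp add: affine_map_def sum_subtractf right_diff_distrib)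
  then show ?thesis
    using abs_sum_mult_le[OF _ uv, of "\<lambda>j. \<phi> (k + (i - 1) * s + j)" t]
      \<phi> affine_map_weight_index[OF i] by simp
qed

lemma param_offset_Suc:
  "param_offset l (Suc k) = param_offset l k + l (Suc k) * l k + l (Suc k)"
  by (simp add: param_offset_def)

lemma param_block_subset:
  assumes "k < L"
  shows "{param_offset l k<..param_offset l (Suc k)} \<subseteq> {1..param_offset l L}"
proof -
  have "param_offset l (Suc k) \<le> param_offset l L"
    unfolding param_offset_def using assms by (intro sum_mono2) auto
  then show ?thesis by auto
qed

definition layer_input :: "(nat \<Rightarrow> real) \<Rightarrow> (nat \<Rightarrow> nat) \<Rightarrow> nat \<Rightarrow> (nat \<Rightarrow> real) \<Rightarrow> (nat \<Rightarrow> real)" where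
  "layer_input \<theta> l k x = (if k = 0 then x else relu_vec (net_layers \<theta> l k x))"

lemma net_layers_Suc_layer_input:
  "net_layers \<theta> l (Suc k) x = affine_map \<theta> (param_offset l k) (l (Suc k)) (l k) (layer_input \<theta> l k x)"
  by (simp add: layer_input_def)

definition width_prod :: "(nat \<Rightarrow> nat) \<Rightarrow> nat \<Rightarrow> real" where
  "width_prod l k = (\<Prod>m\<in>{0..<k}. real (l m + 1))"

definition norm_power_sum :: "real \<Rightarrow> real \<Rightarrow> nat \<Rightarrow> real" where
  "norm_power_sum t s k = (\<Sum>n\<in>{0..<k}. max 1 (t ^ n) * s ^ (k - 1 - n))"

lemma width_prod_Suc: "width_prod l (Suc k) = (real (l k) + 1) * width_prod l k"
  by (simp add: width_prod_def)

lemma width_prod_ge_1: "1 \<le> width_prod l k"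
  unfolding width_prod_def by (rule prod_ge_1) auto

lemma width_prod_nonneg: "0 \<le> width_prod l k"
  using width_prod_ge_1[of l k] by linarith

lemma width_prod_le: "width_prod l k \<le> (real (Max (l ` {0..k})) + 1) ^ k"
proof -
  have "width_prod l k \<le> (\<Prod>m\<in>{0..<k}. real (Max (l ` {0..k})) + 1)"
    unfolding width_prod_def by (rule prod_mono) auto
  then show ?thesis by simp
qed

lemma norm_power_sum_Suc:
  "norm_power_sum t s (Suc k) = max 1 (t ^ k) + s * norm_power_sum t s k"
proof -
  have "s * norm_power_sum t s k = (\<Sum>n\<in>{0..<k}. max 1 (t ^ n) * s ^ (k - n))"
    unfolding norm_power_sum_def sum_distrib_left
    by (intro sum.cong refl) (simp add: Suc_diff_Suc flip: power_Suc)
  then show ?thesis by (simp add: norm_power_sum_def)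
qed

lemma norm_power_sum_nonneg: "0 \<le> s \<Longrightarrow> 0 \<le> norm_power_sum t s k"
  unfolding norm_power_sum_def by (intro sum_nonneg) auto

lemma norm_power_sum_le:
  assumes "0 \<le> t" "0 \<le> s"
  shows "norm_power_sum t s k \<le> real k * max 1 (max t s) ^ (k - 1)"
proof -
  let ?U = "max 1 (max t s)"
  have "max 1 (t ^ n) * s ^ (k - 1 - n) \<le> ?U ^ (k - 1)" if "n < k" for n
  proof -
    have "t ^ n \<le> ?U ^ n" "s ^ (k - 1 - n) \<le> ?U ^ (k - 1 - n)"
      using assms by (auto intro: power_mono)
    then have "max 1 (t ^ n) * s ^ (k - 1 - n) \<le> ?U ^ n * ?U ^ (k - 1 - n)"
      using assms by (intro mult_mono) (auto simp: one_le_power)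
    also have "\<dots> = ?U ^ (k - 1)"
      using that by (simp flip: power_add)
    finally show ?thesis .
  qed
  then have "norm_power_sum t s k \<le> (\<Sum>n\<in>{0..<k}. ?U ^ (k - 1))"
    unfolding norm_power_sum_def by (intro sum_mono) auto
  then show ?thesis by simp
qed

lemma max_1_power_Suc_ge: "0 \<le> (t::real) \<Longrightarrow> t * max 1 (t ^ k) \<le> max 1 (t ^ Suc k)"
  by (cases "t \<le> 1") (auto simp: power_le_one one_le_power)

context
  fixes \<theta> \<phi> :: "nat \<Rightarrow> real" and l :: "nat \<Rightarrow> nat" and L :: nat and t s \<delta> :: real
  assumes nonneg: "0 \<le> t" "0 \<le> s" "0 \<le> \<delta>"
    and \<theta>_bound: "\<forall>p\<in>{1..param_offset l L}. \<bar>\<theta> p\<bar> \<le> t"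
    and \<phi>_bound: "\<forall>p\<in>{1..param_offset l L}. \<bar>\<phi> p\<bar> \<le> s"
    and diff_bound: "\<forall>p\<in>{1..param_offset l L}. \<bar>\<theta> p - \<phi> p\<bar> \<le> \<delta>"
begin

lemma net_layers_Suc_bounds:
  assumes k: "k < L" and i: "1 \<le> i" "i \<le> l (Suc k)" and B: "1 \<le> B" and D: "0 \<le> D"
    and input: "\<forall>j\<in>{1..l k}. \<bar>layer_input \<theta> l k x j\<bar> \<le> B"
    and input_diff: "\<forall>j\<in>{1..l k}. \<bar>layer_input \<theta> l k x j - layer_input \<phi> l k x j\<bar> \<le> D"
  shows "\<bar>net_layers \<theta> l (Suc k) x i\<bar> \<le> (real (l k) + 1) * (t * B)"
    and "\<bar>net_layers \<theta> l (Suc k) x i - net_layers \<phi> l (Suc k) x i\<bar>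
           \<le> (real (l k) + 1) * (\<delta> * B + s * D)"
proof -
  let ?A = "\<lambda>\<psi> u. affine_map \<psi> (param_offset l k) (l (Suc k)) (l k) u i"
  let ?u = "layer_input \<theta> l k x" and ?v = "layer_input \<phi> l k x"
  have block: "{param_offset l k<..param_offset l k + l (Suc k) * l k + l (Suc k)} \<subseteq> {1..param_offset l L}"
    using param_block_subset[OF k, of l] by (simp add: param_offset_Suc)
  have "\<bar>?A \<theta> ?u\<bar> \<le> t * (real (l k) * B + 1)"
    using abs_affine_map_le[OF i input] \<theta>_bound block by blast
  also have "\<dots> \<le> (real (l k) + 1) * (t * B)"
    using mult_left_mono[OF B nonneg(1)] by (simp add: algebra_simps)
  finally show "\<bar>net_layers \<theta> l (Suc k) x i\<bar> \<le> (real (l k) + 1) * (t * B)"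
    by (simp only: net_layers_Suc_layer_input)
  have "\<forall>p\<in>{param_offset l k<..param_offset l k + l (Suc k) * l k + l (Suc k)}.
      \<bar>\<theta> p - \<phi> p\<bar> \<le> \<delta>"
    using diff_bound block by blast
  from abs_affine_map_le[OF i input this]
  have "\<bar>?A \<theta> ?u - ?A \<phi> ?u\<bar> \<le> \<delta> * (real (l k) * B + 1)"
    by (simp only: affine_map_diff_params)
  moreover have "\<bar>?A \<phi> ?u - ?A \<phi> ?v\<bar> \<le> real (l k) * (s * D)"
    using abs_affine_map_diff_inputs_le[OF i input_diff] \<phi>_bound block by blast
  ultimately have "\<bar>?A \<theta> ?u - ?A \<phi> ?v\<bar> \<le> \<delta> * (real (l k) * B + 1) + real (l k) * (s * D)"
    using abs_triangle_ineq[of "?A \<theta> ?u - ?A \<phi> ?u" "?A \<phi> ?u - ?A \<phi> ?v"] by simp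
  also have "\<dots> \<le> (real (l k) + 1) * (\<delta> * B + s * D)"
    using mult_left_mono[OF B nonneg(3)] mult_nonneg_nonneg[OF nonneg(2) D]
    by (simp add: algebra_simps)
  finally show "\<bar>net_layers \<theta> l (Suc k) x i - net_layers \<phi> l (Suc k) x i\<bar>
      \<le> (real (l k) + 1) * (\<delta> * B + s * D)"
    by (simp only: net_layers_Suc_layer_input)
qed

lemma net_layers_Suc_le:
  assumes k: "k < L" and i: "1 \<le> i" "i \<le> l (Suc k)" and c: "1 \<le> c"
    and input: "\<forall>j\<in>{1..l k}. \<bar>layer_input \<theta> l k x j\<bar> \<le> c * width_prod l k * max 1 (t ^ k)"
    and input_diff: "\<forall>j\<in>{1..l k}. \<bar>layer_input \<theta> l k x j - layer_input \<phi> l k x j\<bar>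
      \<le> c * \<delta> * width_prod l k * norm_power_sum t s k"
  shows "\<bar>net_layers \<theta> l (Suc k) x i\<bar> \<le> c * width_prod l (Suc k) * max 1 (t ^ Suc k)"
    and "\<bar>net_layers \<theta> l (Suc k) x i - net_layers \<phi> l (Suc k) x i\<bar>
      \<le> c * \<delta> * width_prod l (Suc k) * norm_power_sum t s (Suc k)"
proof -
  have B: "1 \<le> c * width_prod l k * max 1 (t ^ k)"
    using c width_prod_ge_1 by (intro mult_ge1_I) auto
  have D: "0 \<le> c * \<delta> * width_prod l k * norm_power_sum t s k"
    using c width_prod_ge_1[of l k] nonneg norm_power_sum_nonneg[of s t k] by simp
  note layer = net_layers_Suc_bounds[OF k i B D input input_diff]
  have "\<bar>net_layers \<theta> l (Suc k) x i\<bar> \<le> c * width_prod l (Suc k) * (t * max 1 (t ^ k))"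
    using layer(1) by (simp add: width_prod_Suc algebra_simps)
  also have "\<dots> \<le> c * width_prod l (Suc k) * max 1 (t ^ Suc k)"
    using c width_prod_ge_1[of l "Suc k"] max_1_power_Suc_ge[OF nonneg(1)]
    by (intro mult_left_mono mult_nonneg_nonneg) auto
  finally show "\<bar>net_layers \<theta> l (Suc k) x i\<bar> \<le> c * width_prod l (Suc k) * max 1 (t ^ Suc k)" .
  show "\<bar>net_layers \<theta> l (Suc k) x i - net_layers \<phi> l (Suc k) x i\<bar>
      \<le> c * \<delta> * width_prod l (Suc k) * norm_power_sum t s (Suc k)"
    using layer(2) by (simp add: width_prod_Suc norm_power_sum_Suc algebra_simps)
qed

lemma layer_input_bounds:
  assumes "k \<le> L" and c: "1 \<le> c" and x: "\<forall>j\<in>{1..l 0}. \<bar>x j\<bar> \<le> c"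
  shows "(\<forall>j\<in>{1..l k}. \<bar>layer_input \<theta> l k x j\<bar> \<le> c * width_prod l k * max 1 (t ^ k))
    \<and> (\<forall>j\<in>{1..l k}. \<bar>layer_input \<theta> l k x j - layer_input \<phi> l k x j\<bar>
        \<le> c * \<delta> * width_prod l k * norm_power_sum t s k)"
  using assms(1)
proof (induction k)
  case 0
  then show ?case
    using x by (simp add: layer_input_def width_prod_def norm_power_sum_def)
next
  case (Suc k)
  then have k: "k < L" by simp
  note layer = net_layers_Suc_le[OF k _ _ c conjunct1[OF Suc.IH] conjunct2[OF Suc.IH]]
  have relu: "layer_input \<psi> l (Suc k) x j = max (net_layers \<psi> l (Suc k) x j) 0" for \<psi> j
    by (simp add: layer_input_def relu_vec_def)
  show ?case
    unfolding relu using k layer by (fastforce simp: abs_le_iff)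
qed

lemma realization_diff_le:
  assumes "1 \<le> L" "1 \<le> c" "\<forall>j\<in>{1..l 0}. \<bar>x j\<bar> \<le> c" "1 \<le> i" "i \<le> l L"
  shows "\<bar>realization \<theta> l L x i - realization \<phi> l L x i\<bar>
    \<le> c * \<delta> * width_prod l L * norm_power_sum t s L"
proof -
  obtain k where L: "L = Suc k"
    using assms(1) by (cases L) auto
  then have "k < L" by simp
  note bounds = layer_input_bounds[OF less_imp_le[OF this] assms(2,3)]
  show ?thesis
    unfolding realization_def L
    using net_layers_Suc_le(2)[OF \<open>k < L\<close> _ _ assms(2) bounds[THEN conjunct1] bounds[THEN conjunct2]]
      assms(4,5) L by simp
qed

lemma SUP_realization_diff_le:
  fixes a b :: real
  assumes "a \<le> b" "1 \<le> L" "1 \<le> l L"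
  shows "(SUP x\<in>{x. \<forall>j\<in>{1..l 0}. x j \<in> {a..b}}.
        maxnorm (l L) (\<lambda>i. realization \<theta> l L x i - realization \<phi> l L x i))
      \<le> max 1 (max \<bar>a\<bar> \<bar>b\<bar>) * \<delta> * width_prod l L * norm_power_sum t s L"
proof (rule cSUP_least)
  show "{x. \<forall>j\<in>{1..l 0}. x j \<in> {a..b}} \<noteq> {}"
    using assms(1) by auto
next
  fix x assume "x \<in> {x. \<forall>j\<in>{1..l 0}. x j \<in> {a..b}}"
  then have "\<forall>j\<in>{1..l 0}. \<bar>x j\<bar> \<le> max 1 (max \<bar>a\<bar> \<bar>b\<bar>)"
    by auto
  then show "maxnorm (l L) (\<lambda>i. realization \<theta> l L x i - realization \<phi> l L x i)
      \<le> max 1 (max \<bar>a\<bar> \<bar>b\<bar>) * \<delta> * width_prod l L * norm_power_sum t s L"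
    using realization_diff_le assms(2,3) by (intro maxnorm_le) auto
qed

end

theorem theorem2p36:
  fixes a b :: real and d L :: nat and l :: "nat \<Rightarrow> nat" and \<theta> \<phi> :: "nat \<Rightarrow> real"
  assumes "a \<le> b" and "d \<ge> 1" and "L \<ge> 1"
    and "\<forall>k\<le>L. l k \<ge> 1"
    and "d \<ge> (\<Sum>k=1..L. l k * (l (k - 1) + 1))"
  shows
   "(SUP x\<in>{x. \<forall>j\<in>{1..l 0}. x j \<in> {a..b}}.
        maxnorm (l L) (\<lambda>i. realization \<theta> l L x i - realization \<phi> l L x i))
      \<le> max 1 (max \<bar>a\<bar> \<bar>b\<bar>) * maxnorm d (\<lambda>i. \<theta> i - \<phi> i)
          * (\<Prod>m\<in>{0..<L}. real (l m + 1))
          * (\<Sum>n\<in>{0..<L}. max 1 (maxnorm d \<theta> ^ n) * maxnorm d \<phi> ^ (L - 1 - n))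
    \<and> max 1 (max \<bar>a\<bar> \<bar>b\<bar>) * maxnorm d (\<lambda>i. \<theta> i - \<phi> i)
          * (\<Prod>m\<in>{0..<L}. real (l m + 1))
          * (\<Sum>n\<in>{0..<L}. max 1 (maxnorm d \<theta> ^ n) * maxnorm d \<phi> ^ (L - 1 - n))
      \<le> real L * max 1 (max \<bar>a\<bar> \<bar>b\<bar>)
          * (max 1 (max (maxnorm d \<theta>) (maxnorm d \<phi>))) ^ (L - 1)
          * (\<Prod>m\<in>{0..<L}. real (l m + 1)) * maxnorm d (\<lambda>i. \<theta> i - \<phi> i)
    \<and> real L * max 1 (max \<bar>a\<bar> \<bar>b\<bar>)
          * (max 1 (max (maxnorm d \<theta>) (maxnorm d \<phi>))) ^ (L - 1)
          * (\<Prod>m\<in>{0..<L}. real (l m + 1)) * maxnorm d (\<lambda>i. \<theta> i - \<phi> i)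
      \<le> real L * max 1 (max \<bar>a\<bar> \<bar>b\<bar>) * (real (Max (l ` {0..L})) + 1) ^ L
          * (max 1 (max (maxnorm d \<theta>) (maxnorm d \<phi>))) ^ (L - 1)
          * maxnorm d (\<lambda>i. \<theta> i - \<phi> i)"
proof -
  let ?c = "max 1 (max \<bar>a\<bar> \<bar>b\<bar>)" and ?t = "maxnorm d \<theta>" and ?s = "maxnorm d \<phi>"
    and ?\<delta> = "maxnorm d (\<lambda>i. \<theta> i - \<phi> i)" and ?U = "max 1 (max (maxnorm d \<theta>) (maxnorm d \<phi>))"
  have nonneg: "0 \<le> ?t" "0 \<le> ?s" "0 \<le> ?\<delta>"
    using assms(2) by (simp_all add: maxnorm_nonneg)
  have "param_offset l L \<le> d"
    using assms(5) by (simp add: param_offset_def)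
  note params = abs_le_maxnorm_prefix[OF this, of \<theta>] abs_le_maxnorm_prefix[OF this, of \<phi>]
    abs_le_maxnorm_prefix[OF this, of "\<lambda>i. \<theta> i - \<phi> i"]
  have "(SUP x\<in>{x. \<forall>j\<in>{1..l 0}. x j \<in> {a..b}}.
        maxnorm (l L) (\<lambda>i. realization \<theta> l L x i - realization \<phi> l L x i))
      \<le> ?c * ?\<delta> * width_prod l L * norm_power_sum ?t ?s L"
    using SUP_realization_diff_le[OF nonneg params assms(1,3)] assms(4) by simp
  moreover have "?c * ?\<delta> * width_prod l L * norm_power_sum ?t ?s L
      \<le> real L * ?c * ?U ^ (L - 1) * width_prod l L * ?\<delta>"
    using mult_left_mono[OF norm_power_sum_le[OF nonneg(1,2)], of "?c * ?\<delta> * width_prod l L" L]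
      nonneg(3) width_prod_nonneg[of l L] by (simp add: mult_ac)
  moreover have "real L * ?c * ?U ^ (L - 1) * width_prod l L * ?\<delta>
      \<le> real L * ?c * (real (Max (l ` {0..L})) + 1) ^ L * ?U ^ (L - 1) * ?\<delta>"
    using mult_left_mono[OF width_prod_le, of "real L * ?c * ?U ^ (L - 1) * ?\<delta>" l L]
      nonneg(3) by (simp add: mult_ac)
  ultimately show ?thesis
    unfolding width_prod_def norm_power_sum_def by blast
qed

end
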